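(* Let $n\in\mathbb{N}$ and let $Z$ be a finite right $\mathrm{End}(\mathbb{F}^n)$-set. Then there exists $t\in\mathbb{N}$ such that the composite $X_Z\to G_Z\twoheadrightarrow q_tG_Z$ is a monomorphism. In particular, $X_Z$ is a finite presheaf of degree at most $t$.
   Context: $p$ prime, $\mathbb{F}=\mathbb{F}_p$, $\mathscr{V}_f$ finite-dimensional $\mathbb{F}$-vector spaces; presheaves are contravariant functors on $\mathscr{V}_f$. $\mathscr{F}$ is the abelian category of functors $\mathscr{V}_f^{\mathrm{op}}\to$ ($\mathbb{F}$-vector spaces); a functor is finite if it has a finite composition series. Polynomial degree in $\mathscr{F}$ is in the sense of Eilenberg–MacLane (vanishing of the $(t+1)$-st cross-effect); $q_t:\mathscr{F}\to\mathscr{F}$ is left adjoint to the inclusion of functors of polynomial degree $\le t$, and $F\twoheadrightarrow q_tF$ is the universal map to a polynomial functor of degree $\le t$. $X_Z$ is the presheaf $V\mapsto Z\times_{\mathrm{End}(\mathbb{F}^n)}\mathrm{Hom}(V,\mathbb{F}^n)$, $G_Z\in\mathscr{F}$ is $V\mapsto\mathbb{F}[Z]\otimes_{\mathbb{F}[\mathrm{End}(\mathbb{F}^n)]}\mathbb{F}[\mathrm{Hom}(V,\mathbb{F}^n)]$, and $X_Z\to G_Z$ is induced by $Z\hookrightarrow\mathbb{F}[Z]$. A presheaf $X$ taking finite values is finite of degree at most $t$ if the composite $X\hookrightarrow\mathbb{F}[X]\twoheadrightarrow q_t\mathbb{F}[X]$ is a monomorphism ($\mathbb{F}[X]$ the sectionwise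 linearization); equivalently $X$ embeds in a finite functor of $\mathscr{F}$ of polynomial degree $\le t$. *)

theory Defs
  imports "HOL-Computational_Algebra.Primes" "HOL-Library.Function_Algebras" "HOL-Library.Cardinality"
begin

text \<open>The field is a finite field 'k of prime cardinality p (i.e. F_p).  Finite-dimensional
  F-vector spaces are represented by the skeleton F^m, m \<in> nat.  A linear map F^m \<rightarrow> F^n is
  an n \<times> m matrix, encoded as a function nat \<Rightarrow> nat \<Rightarrow> 'k vanishing outside the range.\<close>

type_synonym 'k mat = "nat \<Rightarrow> nat \<Rightarrow> 'k"

definition hom :: "nat \<Rightarrow> nat \<Rightarrow> ('k::zero) mat set" where
  "hom m n = {A. \<forall>i j. A i j \<noteq> 0 \<longrightarrow> i < n \<and> j < m}"

text \<open>Composition: for A : F^k \<rightarrow> F^n and B : F^m \<rightarrow> F^k, mmult k A B is A \<circ> B.\<close>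
definition mmult :: "nat \<Rightarrow> ('k::comm_semiring_1) mat \<Rightarrow> 'k mat \<Rightarrow> 'k mat" where
  "mmult k A B = (\<lambda>i j. \<Sum>l<k. A i l * B l j)"

definition idm :: "nat \<Rightarrow> ('k::{zero,one}) mat" where
  "idm n = (\<lambda>i j. if i = j \<and> i < n then 1 else 0)"

definition right_End_set :: "nat \<Rightarrow> 'z set \<Rightarrow> ('z \<Rightarrow> ('k::field) mat \<Rightarrow> 'z) \<Rightarrow> bool" where
  "right_End_set n Z act \<longleftrightarrow>
     (\<forall>z\<in>Z. \<forall>a\<in>hom n n. act z a \<in> Z) \<and>
     (\<forall>z\<in>Z. act z (idm n) = z) \<and>
     (\<forall>z\<in>Z. \<forall>a\<in>hom n n. \<forall>b\<in>hom n n. act (act z a) b = act z (mmult n a b))"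

text \<open>X_Z(F^m) = Z \<times>_{End(F^n)} Hom(F^m,F^n) = (Z \<times> hom m n) modulo the equivalence
  relation generated by (z\<cdot>a, f) ~ (z, a \<circ> f).\<close>
definition XZ_gen :: "nat \<Rightarrow> 'z set \<Rightarrow> ('z \<Rightarrow> ('k::field) mat \<Rightarrow> 'z) \<Rightarrow> nat
    \<Rightarrow> (('z \<times> 'k mat) \<times> ('z \<times> 'k mat)) set" where
  "XZ_gen n Z act m =
     {((act z a, f), (z, mmult n a f)) | z a f. z \<in> Z \<and> a \<in> hom n n \<and> f \<in> hom m n}"

definition XZ_equiv :: "nat \<Rightarrow> 'z set \<Rightarrow> ('z \<Rightarrow> ('k::field) mat \<Rightarrow> 'z) \<Rightarrow> nat
    \<Rightarrow> (('z \<times> 'k mat) \<times> ('z \<times> 'k mat)) set" where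
  "XZ_equiv n Z act m = (XZ_gen n Z act m \<union> (XZ_gen n Z act m)\<inverse>)\<^sup>*"

text \<open>The free vector space F[Z \<times> Hom(F^m,F^n)] (finitely supported functions; finiteness of
  support is automatic since Z and hom m n are finite).\<close>
definition FV :: "nat \<Rightarrow> 'z set \<Rightarrow> nat \<Rightarrow> ('z \<times> ('k::field) mat \<Rightarrow> 'k) set" where
  "FV n Z m = {v. \<forall>x. v x \<noteq> 0 \<longrightarrow> x \<in> Z \<times> hom m n}"

definition delta :: "'a \<Rightarrow> 'a \<Rightarrow> ('k::{zero,one})" where
  "delta x = (\<lambda>y. if y = x then 1 else 0)"

text \<open>Contravariant functoriality: for g : F^m' \<rightarrow> F^m, the basis element (z,f) with
  f : F^m \<rightarrow> F^n is sent to (z, f \<circ> g); pull n m g is its linear extension.\<close>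
definition pull :: "nat \<Rightarrow> nat \<Rightarrow> ('k::field) mat \<Rightarrow> ('z \<times> 'k mat \<Rightarrow> 'k) \<Rightarrow> ('z \<times> 'k mat \<Rightarrow> 'k)" where
  "pull n m g v = (\<lambda>(z, h). \<Sum>f\<in>{f \<in> hom m n. mmult m f g = h}. v (z, f))"

text \<open>G_Z(F^m) = F[Z] \<otimes>_{F[End(F^n)]} F[Hom(F^m,F^n)] is the quotient of F[Z \<times> Hom(F^m,F^n)]
  by the span of the balancing relations z\<cdot>a \<otimes> f - z \<otimes> a\<circ>f.\<close>
definition GZ_rels :: "nat \<Rightarrow> 'z set \<Rightarrow> ('z \<Rightarrow> ('k::field) mat \<Rightarrow> 'z) \<Rightarrow> nat
    \<Rightarrow> ('z \<times> 'k mat \<Rightarrow> 'k) set" where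
  "GZ_rels n Z act m =
     {delta (act z a, f) - delta (z, mmult n a f) | z a f. z \<in> Z \<and> a \<in> hom n n \<and> f \<in> hom m n}"

text \<open>Subfunctors of G_Z, represented by their preimages K in the free functor: families of
  linear subspaces containing the balancing relations and stable under pullbacks.\<close>
definition GZ_subfunctor :: "nat \<Rightarrow> 'z set \<Rightarrow> ('z \<Rightarrow> ('k::field) mat \<Rightarrow> 'z)
    \<Rightarrow> (nat \<Rightarrow> ('z \<times> 'k mat \<Rightarrow> 'k) set) \<Rightarrow> bool" where
  "GZ_subfunctor n Z act K \<longleftrightarrow>
     (\<forall>m. K m \<subseteq> FV n Z m \<and> 0 \<in> K m \<and> (\<forall>v\<in>K m. \<forall>w\<in>K m. v + w \<in> K m)
          \<and> (\<forall>c. \<forall>v\<in>K m. (\<lambda>x. c * v x) \<in> K m)) \<and>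
     (\<forall>m m'. \<forall>g\<in>hom m' m. \<forall>v\<in>K m. pull n m g v \<in> K m') \<and>
     (\<forall>m. GZ_rels n Z act m \<subseteq> K m)"

text \<open>Block idempotent e_I of V = V_0 \<oplus> ... \<oplus> V_t = F^M, where coordinate j < M lies in block b j:
  the projection onto \<Oplus>_{i \<in> I} V_i.\<close>
definition block_idem :: "nat \<Rightarrow> (nat \<Rightarrow> nat) \<Rightarrow> nat set \<Rightarrow> ('k::{zero,one}) mat" where
  "block_idem M b I = (\<lambda>i j. if i = j \<and> i < M \<and> b i \<in> I then 1 else 0)"

text \<open>The quotient G_Z/K has polynomial degree \<le> t (Eilenberg-MacLane): its (t+1)-st cross-effect
  vanishes, i.e. the cross-effect idempotent \<Sum>_{I \<subseteq> {0..t}} (-1)^{t+1-|I|} F(e_I) on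
  F(V_0 \<oplus> ... \<oplus> V_t) is zero, for all V_0,...,V_t.\<close>
definition quotient_deg_le :: "nat \<Rightarrow> 'z set \<Rightarrow> nat
    \<Rightarrow> (nat \<Rightarrow> ('z \<times> ('k::field) mat \<Rightarrow> 'k) set) \<Rightarrow> bool" where
  "quotient_deg_le n Z t K \<longleftrightarrow>
     (\<forall>M b. (\<forall>j<M. b j \<le> t) \<longrightarrow>
        (\<forall>v\<in>FV n Z M.
           (\<Sum>I\<in>Pow {0..t}. (\<lambda>x. (-1) ^ (t + 1 - card I) * pull n M (block_idem M b I) v x))
             \<in> K M))"

text \<open>Kernel of F[Z \<times> Hom(F^m,F^n)] \<rightarrow> G_Z(F^m) \<rightarrow> q_t G_Z(F^m): the smallest subfunctor K
  of G_Z with G_Z/K of degree \<le> t (so q_t G_Z = G_Z / K).\<close>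
definition qt_ker :: "nat \<Rightarrow> 'z set \<Rightarrow> ('z \<Rightarrow> ('k::field) mat \<Rightarrow> 'z) \<Rightarrow> nat \<Rightarrow> nat
    \<Rightarrow> ('z \<times> 'k mat \<Rightarrow> 'k) set" where
  "qt_ker n Z act t m =
     \<Inter>{K m | K. GZ_subfunctor n Z act K \<and> quotient_deg_le n Z t K}"

end

theory Submission
  imports Defs "HOL-Library.FuncSet"
begin

text \<open>Any two maps f, f' : F^m \<rightarrow> F^n factor simultaneously as f = (f u) g and f' = (f' u) g
  through one space F^D, where D depends only on n. Test a vector of F[Z \<times> Hom(F^m,F^n)] against
  the functionals (z, h) \<mapsto> [(z, h u) \<in> C], for u : F^D \<rightarrow> F^m and C a union of classes of
  X_Z(F^D). The common kernel K of these functionals is a subfunctor containing the balancing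
  relations, and it separates inequivalent pairs (test with u and the class of (z, f u)).
  Evaluated on the cross-effect terms f e_I, a functional becomes an alternating sum of a
  function on the finite group Hom(F^D,F^n) at the partial sums of t+1 elements W_0, ..., W_t.
  For t = p |Hom(F^D,F^n)| some p of the W_i coincide, and the p-th difference with a constant
  step vanishes in characteristic p. So G_Z/K has degree at most t and the kernel of
  G_Z \<rightarrow> q_t G_Z lies in K.\<close>

definition finite_difference ::
    "(nat \<Rightarrow> 'a::comm_ring_1) \<Rightarrow> nat set \<Rightarrow> ('a \<Rightarrow> 'b::comm_ring_1) \<Rightarrow> 'a \<Rightarrow> 'b" where
  "finite_difference w S \<Psi> y = (\<Sum>I\<in>Pow S. (-1) ^ (card S - card I) * \<Psi> (y + (\<Sum>i\<in>I. w i)))"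

lemma finite_difference_empty [simp]: "finite_difference w {} \<Psi> y = \<Psi> y"
  by (simp add: finite_difference_def)

lemma finite_difference_zero [simp]: "finite_difference w S (\<lambda>_. 0) y = 0"
  by (simp add: finite_difference_def)

lemma finite_difference_insert:
  assumes "finite S" "x \<notin> S"
  shows "finite_difference w (insert x S) \<Psi> y
           = finite_difference w S \<Psi> (y + w x) - finite_difference w S \<Psi> y"
proof -
  have inj: "inj_on (insert x) (Pow S)"
    using assms by (auto simp: inj_on_def)
  have card_insert: "card (insert x S) = Suc (card S)"
    using assms by simp
  have "finite_difference w (insert x S) \<Psi> y
     = (\<Sum>I\<in>Pow S. (-1) ^ (card (insert x S) - card I) * \<Psi> (y + (\<Sum>i\<in>I. w i)))
     + (\<Sum>I\<in>insert x ` Pow S. (-1) ^ (card (insert x S) - card I) * \<Psi> (y + (\<Sum>i\<in>I. w i)))"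
    unfolding finite_difference_def Pow_insert using assms
    by (intro sum.union_disjoint) auto
  also have "(\<Sum>I\<in>Pow S. (-1) ^ (card (insert x S) - card I) * \<Psi> (y + (\<Sum>i\<in>I. w i)))
     = - finite_difference w S \<Psi> y"
    unfolding finite_difference_def sum_negf[symmetric]
  proof (rule sum.cong[OF refl])
    fix I assume "I \<in> Pow S"
    then have "card (insert x S) - card I = Suc (card S - card I)"
      using assms card_insert by (simp add: card_mono Suc_diff_le)
    then show "(-1) ^ (card (insert x S) - card I) * \<Psi> (y + (\<Sum>i\<in>I. w i))
      = - ((-1) ^ (card S - card I) * \<Psi> (y + (\<Sum>i\<in>I. w i)))" by simp
  qed
  also have "(\<Sum>I\<in>insert x ` Pow S. (-1) ^ (card (insert x S) - card I) * \<Psi> (y + (\<Sum>i\<in>I. w i)))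
     = finite_difference w S \<Psi> (y + w x)"
    unfolding finite_difference_def sum.reindex[OF inj] o_def
  proof (rule sum.cong[OF refl])
    fix I assume "I \<in> Pow S"
    then have "finite I" "x \<notin> I"
      using assms finite_subset by auto
    then show "(-1) ^ (card (insert x S) - card (insert x I)) * \<Psi> (y + (\<Sum>i\<in>insert x I. w i))
      = (-1) ^ (card S - card I) * \<Psi> (y + w x + (\<Sum>i\<in>I. w i))"
      using card_insert by (simp add: add.assoc)
  qed
  finally show ?thesis by simp
qed

lemma finite_difference_Un:
  assumes "finite S" "finite P" "S \<inter> P = {}"
  shows "finite_difference w (S \<union> P) \<Psi> y = finite_difference w S (finite_difference w P \<Psi>) y"
  using assms
proof (induction S arbitrary: y rule: finite_induct)
  case empty
  then show ?case by simp
next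
  case (insert x S)
  have "finite_difference w (insert x S \<union> P) \<Psi> y
      = finite_difference w (S \<union> P) \<Psi> (y + w x) - finite_difference w (S \<union> P) \<Psi> y"
    unfolding Un_insert_left using insert by (intro finite_difference_insert) auto
  also have "\<dots> = finite_difference w (insert x S) (finite_difference w P \<Psi>) y"
    using insert by (simp add: finite_difference_insert)
  finally show ?case .
qed

lemma sum_Pow_card:
  fixes h :: "nat \<Rightarrow> 'b::comm_semiring_1"
  assumes "finite P"
  shows "(\<Sum>I\<in>Pow P. h (card I)) = (\<Sum>k\<le>card P. of_nat (card P choose k) * h k)"
proof -
  have "(\<Sum>I\<in>Pow P. h (card I)) = (\<Sum>k\<le>card P. \<Sum>I\<in>{I \<in> Pow P. card I = k}. h (card I))"
    using assms by (intro sum.group[symmetric]) (auto simp: card_mono)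
  also have "\<dots> = (\<Sum>k\<le>card P. of_nat (card P choose k) * h k)"
  proof (rule sum.cong[OF refl])
    fix k
    have "{I \<in> Pow P. card I = k} = {I. I \<subseteq> P \<and> card I = k}" by auto
    then show "(\<Sum>I\<in>{I \<in> Pow P. card I = k}. h (card I)) = of_nat (card P choose k) * h k"
      using n_subsets[OF assms, of k] by simp
  qed
  finally show ?thesis .
qed

text \<open>The p-th difference with a constant step vanishes in characteristic p: all binomial
  coefficients except the outer two are divisible by p, and those two cancel because
  (-1)^p = -1 in characteristic p (also for p = 2).\<close>
lemma finite_difference_const_step:
  fixes w :: "nat \<Rightarrow> 'a::comm_ring_1" and \<Psi> :: "'a \<Rightarrow> 'b::comm_ring_1"
  assumes p: "prime p" and char_a: "of_nat p = (0::'a)" and char_b: "of_nat p = (0::'b)"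
    and "finite P" "card P = p" "\<forall>i\<in>P. w i = c"
  shows "finite_difference w P \<Psi> y = 0"
proof -
  define h where "h k = (-1) ^ (p - k) * \<Psi> (y + of_nat k * c)" for k
  have "finite_difference w P \<Psi> y = (\<Sum>I\<in>Pow P. h (card I))"
    unfolding finite_difference_def h_def \<open>card P = p\<close>
  proof (rule sum.cong[OF refl])
    fix I assume "I \<in> Pow P"
    then have "(\<Sum>i\<in>I. w i) = of_nat (card I) * c"
      using \<open>\<forall>i\<in>P. w i = c\<close> by (simp add: subset_iff)
    then show "(-1) ^ (p - card I) * \<Psi> (y + (\<Sum>i\<in>I. w i))
      = (-1) ^ (p - card I) * \<Psi> (y + of_nat (card I) * c)" by simp
  qed
  also have "\<dots> = (\<Sum>k\<le>p. of_nat (p choose k) * h k)"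
    using sum_Pow_card[OF \<open>finite P\<close>, of h] \<open>card P = p\<close> by simp
  also have "\<dots> = (\<Sum>k\<in>{0, p}. of_nat (p choose k) * h k)"
  proof (rule sum.mono_neutral_right)
    show "\<forall>k\<in>{..p} - {0, p}. of_nat (p choose k) * h k = 0"
    proof
      fix k assume "k \<in> {..p} - {0, p}"
      then have "p dvd (p choose k)"
        using p by (intro dvd_choose_prime) auto
      then show "of_nat (p choose k) * h k = 0"
        using char_b by (auto elim!: dvdE)
    qed
  qed auto
  also have "\<dots> = ((-1) ^ p + 1) * \<Psi> y"
    using p char_a by (simp add: h_def prime_gt_0_nat distrib_right)
  also have "(-1) ^ p + 1 = (0::'b)"
  proof (cases "p = 2")
    case True
    then show ?thesis using char_b by simp
  next
    case False
    then have "odd p"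
      using p prime_odd_nat prime_ge_2_nat[OF p] by fastforce
    then show ?thesis by simp
  qed
  finally show ?thesis by simp
qed

text \<open>Among more than (p-1)|W| steps with values in W, some value occurs p times, and the
  corresponding p-fold difference factors out of the whole alternating sum.\<close>
lemma alternating_subset_sum_vanishes:
  fixes w :: "nat \<Rightarrow> 'a::comm_ring_1" and \<Psi> :: "'a \<Rightarrow> 'b::comm_ring_1"
  assumes p: "prime p" and char_a: "of_nat p = (0::'a)" and char_b: "of_nat p = (0::'b)"
    and "finite S" "finite W" "w \<in> S \<rightarrow> W" and many: "(p - 1) * card W < card S"
  shows "(\<Sum>I\<in>Pow S. (-1) ^ (card S - card I) * \<Psi> (\<Sum>i\<in>I. w i)) = 0"
proof -
  obtain s where "s \<in> S"
    using many by fastforce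
  then have "W \<noteq> {}"
    using \<open>w \<in> S \<rightarrow> W\<close> by auto
  then obtain c where "card (w -` {c} \<inter> S) * card W \<ge> card S"
    using pigeonhole_card[OF \<open>w \<in> S \<rightarrow> W\<close> \<open>finite S\<close> \<open>finite W\<close>] by blast
  with many have "(p - 1) * card W < card (w -` {c} \<inter> S) * card W"
    by linarith
  then have "p \<le> card (w -` {c} \<inter> S)"
    using prime_gt_0_nat[OF p] by (simp only: mult_less_cancel2) linarith
  then obtain P where P: "P \<subseteq> w -` {c} \<inter> S" "card P = p" "finite P"
    by (rule obtain_subset_with_card_n)
  have difference_P: "finite_difference w P \<Psi> = (\<lambda>_. 0)"
    using P by (intro ext finite_difference_const_step[OF p char_a char_b, where c = c]) auto
  have "S = (S - P) \<union> P"
    using P by auto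
  then have "finite_difference w S \<Psi> 0 = finite_difference w (S - P) (finite_difference w P \<Psi>) 0"
    using \<open>finite S\<close> P by (metis Diff_disjoint finite_Diff finite_difference_Un inf_commute)
  also have "\<dots> = 0"
    by (simp add: difference_P)
  finally show ?thesis
    by (simp add: finite_difference_def)
qed

lemma mmult_hom: "A \<in> hom k n \<Longrightarrow> B \<in> hom m k \<Longrightarrow> mmult k A B \<in> hom m n"
  unfolding hom_def mmult_def
proof clarify
  fix i j
  assume A: "\<forall>i j. A i j \<noteq> 0 \<longrightarrow> i < n \<and> j < k" and B: "\<forall>i j. B i j \<noteq> 0 \<longrightarrow> i < k \<and> j < m"
    and "(\<Sum>l<k. A i l * B l j) \<noteq> 0"
  then obtain l where "A i l * B l j \<noteq> 0"
    by (meson sum.not_neutral_contains_not_neutral)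
  then show "i < n \<and> j < m"
    using A B by (metis mult_zero_left mult_zero_right)
qed

lemma mmult_assoc: "mmult k (mmult j A B) C = mmult j A (mmult k B C)"
  unfolding mmult_def
  by (auto simp: sum_distrib_left sum_distrib_right mult.assoc intro!: ext sum.swap)

lemma mmult_sum_left: "mmult k (\<Sum>l\<in>I. A l) B = (\<Sum>l\<in>I. mmult k (A l) B)"
  by (induction I rule: infinite_finite_induct)
    (auto simp: mmult_def distrib_right sum.distrib fun_eq_iff)

lemma mmult_sum_right: "mmult k A (\<Sum>l\<in>I. B l) = (\<Sum>l\<in>I. mmult k A (B l))"
  by (induction I rule: infinite_finite_induct)
    (auto simp: mmult_def distrib_left sum.distrib fun_eq_iff)

lemma finite_hom: "finite (hom m n :: ('k::{zero,finite}) mat set)"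
proof -
  let ?dom = "{..<n} \<times> {..<m}"
  have "hom m n \<subseteq> (\<lambda>F i j. if (i, j) \<in> ?dom then F (i, j) else 0) ` (?dom \<rightarrow>\<^sub>E (UNIV :: 'k set))"
  proof
    fix A :: "'k mat" assume "A \<in> hom m n"
    then have "A = (\<lambda>i j. if (i, j) \<in> ?dom then restrict (case_prod A) ?dom (i, j) else 0)"
      by (auto simp: hom_def fun_eq_iff)
    then show "A \<in> (\<lambda>F i j. if (i, j) \<in> ?dom then F (i, j) else 0) ` (?dom \<rightarrow>\<^sub>E UNIV)"
      by (intro image_eqI[where x = "restrict (case_prod A) ?dom"]) auto
  qed
  then show ?thesis
    by (rule finite_subset) (intro finite_imageI finite_PiE; simp)
qed

lemma block_idem_hom: "block_idem M b I \<in> hom M M"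
  unfolding hom_def block_idem_def by auto

lemma sum_apply_fun: "(\<Sum>l\<in>I. F l) x = (\<Sum>l\<in>I. F l x)"
  by (induction I rule: infinite_finite_induct) auto

lemma block_idem_eq_sum:
  "finite I \<Longrightarrow> block_idem M b I = (\<Sum>l\<in>I. block_idem M b {l})"
  by (auto simp: block_idem_def fun_eq_iff sum_apply_fun if_distrib[of "\<lambda>x. x = _"] sum.delta
      cong: conj_cong intro!: sum.neutral)

definition column :: "('k::zero) mat \<Rightarrow> nat \<Rightarrow> 'k mat" where
  "column f j = (\<lambda>i k. if k = 0 then f i j else 0)"

lemma column_hom: "f \<in> hom m n \<Longrightarrow> column f j \<in> hom 1 n"
  by (auto simp: hom_def column_def)

lemma column_eq_iff: "column f j = column f j' \<longleftrightarrow> (\<forall>i. f i j = f i j')"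
  by (auto simp: column_def fun_eq_iff)

text \<open>D = |hom 1 n \<times> hom 1 n| bounds the number of distinct pairs (column j of f, column j of f'),
  independently of m; g sends the j-th basis vector to the basis vector indexing the pair of
  column j, and u sends that basis vector back to one column index realising the pair.\<close>
lemma common_factorization:
  fixes f f' :: "('k::{field,finite}) mat"
  assumes "f \<in> hom m n" "f' \<in> hom m n"
    and D: "D = card (hom 1 n \<times> hom 1 n :: ('k mat \<times> 'k mat) set)"
  shows "\<exists>u\<in>hom D m. \<exists>g\<in>hom m D. mmult D (mmult m f u) g = f \<and> mmult D (mmult m f' u) g = f'"
proof -
  define P where "P = (hom 1 n \<times> hom 1 n :: ('k mat \<times> 'k mat) set)"
  obtain h where h: "bij_betw h P {..<D}"
    using ex_bij_betw_finite_nat[of P] finite_hom unfolding D P_def atLeast0LessThan by blast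
  define e where "e j = h (column f j, column f' j)" for j
  define L where "L = inv_into {..<m} e"
  define g :: "'k mat" where "g = (\<lambda>k j. if j < m \<and> k = e j then 1 else 0)"
  define u :: "'k mat" where "u = (\<lambda>l k. if k \<in> e ` {..<m} \<and> l = L k then 1 else 0)"
  have e_less: "e j < D" for j
    using h column_hom[OF assms(1)] column_hom[OF assms(2)]
    unfolding e_def P_def bij_betw_def by auto
  have L_less: "k \<in> e ` {..<m} \<Longrightarrow> L k < m" for k
    unfolding L_def using inv_into_into[of k e "{..<m}"] by simp
  have "g \<in> hom m D"
    using e_less by (auto simp: g_def hom_def)
  moreover have "u \<in> hom D m"
    using e_less L_less by (auto simp: u_def hom_def)
  moreover have "mmult D (mmult m F u) g = F"
    if "F \<in> hom m n" and F_col: "\<And>j j'. e j = e j' \<Longrightarrow> column F j = column F j'" for F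
  proof (intro ext)
    fix i j
    have Fu: "mmult m F u i k = (if k \<in> e ` {..<m} then F i (L k) else 0)" for k
      unfolding mmult_def u_def
      by (auto simp: if_distrib[of "\<lambda>x. _ * x"] L_less cong: if_cong)
    have "mmult D (mmult m F u) g i j = (if j < m then mmult m F u i (e j) else 0)"
      unfolding mmult_def[of D] g_def using e_less
      by (simp add: if_distrib[of "\<lambda>x. _ * x"] cong: if_cong)
    also have "\<dots> = F i j"
    proof (cases "j < m")
      case True
      then have "e (L (e j)) = e j"
        unfolding L_def by (intro f_inv_into_f) auto
      then have "F i (L (e j)) = F i j"
        using F_col column_eq_iff by metis
      then show ?thesis
        using True Fu by simp
    next
      case False
      then show ?thesis
        using \<open>F \<in> hom m n\<close> by (auto simp: hom_def)
    qed
    finally show "mmult D (mmult m F u) g i j = F i j" .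
  qed
  moreover have "e j = e j' \<Longrightarrow> column f j = column f j' \<and> column f' j = column f' j'" for j j'
    using h column_hom[OF assms(1)] column_hom[OF assms(2)]
    unfolding e_def P_def bij_betw_def inj_on_def by blast
  ultimately show ?thesis
    using assms(1,2) by blast
qed

lemma sym_XZ_equiv: "sym (XZ_equiv n Z act k)"
  unfolding XZ_equiv_def by (intro sym_rtrancl sym_Un_converse)

lemma trans_XZ_equiv: "trans (XZ_equiv n Z act k)"
  unfolding XZ_equiv_def by (rule trans_rtrancl)

lemma XZ_gen_pull:
  assumes "(x, y) \<in> XZ_gen n Z act k" and "g \<in> hom m k"
  shows "((fst x, mmult k (snd x) g), (fst y, mmult k (snd y) g)) \<in> XZ_gen n Z act m"
proof -
  obtain z a f where "x = (act z a, f)" "y = (z, mmult n a f)"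
    and "z \<in> Z" "a \<in> hom n n" "f \<in> hom k n"
    using assms(1) unfolding XZ_gen_def by blast
  moreover have "((act z a, mmult k f g), (z, mmult n a (mmult k f g))) \<in> XZ_gen n Z act m"
    unfolding XZ_gen_def using calculation(3-5) assms(2) mmult_hom by blast
  ultimately show ?thesis
    by (simp add: mmult_assoc)
qed

lemma XZ_equiv_pull:
  assumes "(x, y) \<in> XZ_equiv n Z act k" and "g \<in> hom m k"
  shows "((fst x, mmult k (snd x) g), (fst y, mmult k (snd y) g)) \<in> XZ_equiv n Z act m"
  using assms(1) unfolding XZ_equiv_def
proof (induction rule: rtrancl_induct)
  case (step y w)
  then have "((fst y, mmult k (snd y) g), (fst w, mmult k (snd w) g))
      \<in> XZ_gen n Z act m \<union> (XZ_gen n Z act m)\<inverse>"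
    using XZ_gen_pull[OF _ assms(2), of y w] XZ_gen_pull[OF _ assms(2), of w y] by auto
  with step.IH show ?case
    by (rule rtrancl_into_rtrancl)
qed simp

definition saturated ::
    "nat \<Rightarrow> 'z set \<Rightarrow> ('z \<Rightarrow> ('k::field) mat \<Rightarrow> 'z) \<Rightarrow> nat \<Rightarrow> ('z \<times> 'k mat) set \<Rightarrow> bool" where
  "saturated n Z act D C \<longleftrightarrow> (\<forall>x y. (x, y) \<in> XZ_equiv n Z act D \<longrightarrow> (x \<in> C \<longleftrightarrow> y \<in> C))"

lemma saturated_XZ_class: "saturated n Z act D {y. (x, y) \<in> XZ_equiv n Z act D}"
  using sym_XZ_equiv trans_XZ_equiv unfolding saturated_def by (blast dest: symD transD)

definition pairing ::
    "nat \<Rightarrow> 'z set \<Rightarrow> nat \<Rightarrow> ('z \<times> ('k::field) mat \<Rightarrow> 'k) \<Rightarrow> ('z \<times> 'k mat \<Rightarrow> 'k) \<Rightarrow> 'k" where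
  "pairing n Z m v \<phi> = (\<Sum>x\<in>Z \<times> hom m n. v x * \<phi> x)"

lemma pairing_diff: "pairing n Z m (v - w) \<phi> = pairing n Z m v \<phi> - pairing n Z m w \<phi>"
  unfolding pairing_def by (simp add: sum_subtractf left_diff_distrib)

lemma pairing_add: "pairing n Z m (v + w) \<phi> = pairing n Z m v \<phi> + pairing n Z m w \<phi>"
  unfolding pairing_def by (simp add: sum.distrib distrib_right)

lemma pairing_scale: "pairing n Z m (\<lambda>x. c * v x) \<phi> = c * pairing n Z m v \<phi>"
  unfolding pairing_def by (simp add: sum_distrib_left mult.assoc)

lemma pairing_sum: "pairing n Z m (\<Sum>I\<in>A. V I) \<phi> = (\<Sum>I\<in>A. pairing n Z m (V I) \<phi>)"
  unfolding pairing_def sum_apply_fun by (simp add: sum_distrib_right sum.swap[of _ A])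

lemma pairing_delta:
  assumes "finite Z" and "x \<in> Z \<times> hom m n"
  shows "pairing n Z m (delta x :: 'z \<times> ('k::{field,finite}) mat \<Rightarrow> 'k) \<phi> = \<phi> x"
proof -
  have "pairing n Z m (delta x) \<phi> = (\<Sum>y\<in>Z \<times> hom m n. if y = x then \<phi> x else 0)"
    unfolding pairing_def by (rule sum.cong) (auto simp: delta_def)
  moreover have "finite (Z \<times> (hom m n :: 'k mat set))"
    using assms(1) by (intro finite_SigmaI finite_hom)
  ultimately show ?thesis
    using assms(2) by simp
qed

lemma pairing_pull:
  fixes v :: "'z \<times> ('k::{field,finite}) mat \<Rightarrow> 'k"
  assumes "finite Z" and g: "g \<in> hom m' m"
  shows "pairing n Z m' (pull n m g v) \<phi> = pairing n Z m v (\<lambda>(z, f). \<phi> (z, mmult m f g))"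
proof -
  define G where "G = (\<lambda>(z :: 'z, f). (z, mmult m f g))"
  have G_into: "G ` (Z \<times> hom m n) \<subseteq> Z \<times> hom m' n"
    using g by (auto simp: G_def intro: mmult_hom)
  have fibre: "(\<Sum>x\<in>{x \<in> Z \<times> hom m n. G x = y}. v x) = pull n m g v y"
    if y_in: "y \<in> Z \<times> hom m' n" for y
  proof -
    obtain z h where y: "y = (z, h)" "z \<in> Z"
      using y_in by (cases y) auto
    have "{x \<in> Z \<times> hom m n. G x = y} = Pair z ` {f \<in> hom m n. mmult m f g = h}"
      using y by (auto simp: G_def)
    then show ?thesis
      by (simp add: sum.reindex inj_on_def pull_def y)
  qed
  have "pairing n Z m v (\<lambda>(z, f). \<phi> (z, mmult m f g)) = (\<Sum>x\<in>Z \<times> hom m n. v x * \<phi> (G x))"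
    by (simp add: pairing_def G_def case_prod_beta)
  also have "\<dots> = (\<Sum>y\<in>Z \<times> hom m' n. \<Sum>x\<in>{x \<in> Z \<times> hom m n. G x = y}. v x * \<phi> (G x))"
    using assms(1) G_into by (intro sum.group[symmetric] finite_SigmaI finite_hom)
  also have "\<dots> = (\<Sum>y\<in>Z \<times> hom m' n. pull n m g v y * \<phi> y)"
    by (intro sum.cong refl) (simp add: sum_distrib_right[symmetric] fibre)
  finally show ?thesis
    unfolding pairing_def ..
qed

lemma FV_iff: "v \<in> FV n Z m \<longleftrightarrow> (\<forall>x. x \<notin> Z \<times> hom m n \<longrightarrow> v x = 0)"
  by (auto simp: FV_def)

lemma FV_add: "v \<in> FV n Z m \<Longrightarrow> w \<in> FV n Z m \<Longrightarrow> v + w \<in> FV n Z m"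
  by (simp add: FV_iff)

lemma FV_scale: "v \<in> FV n Z m \<Longrightarrow> (\<lambda>x. c * v x) \<in> FV n Z m"
  by (simp add: FV_iff)

lemma FV_sum: "(\<And>I. I \<in> A \<Longrightarrow> V I \<in> FV n Z m) \<Longrightarrow> (\<Sum>I\<in>A. V I) \<in> FV n Z m"
  by (simp add: FV_iff sum_apply_fun)

lemma FV_pull:
  assumes v: "v \<in> FV n Z m" and g: "g \<in> hom m' m"
  shows "pull n m g v \<in> FV n Z m'"
  unfolding FV_def
proof (intro CollectI allI impI)
  fix x assume "pull n m g v x \<noteq> 0"
  moreover obtain z h where x: "x = (z, h)"
    by fastforce
  ultimately obtain f where "f \<in> hom m n" "mmult m f g = h" "v (z, f) \<noteq> 0"
    unfolding pull_def by (auto elim: sum.not_neutral_contains_not_neutral)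
  with v g x show "x \<in> Z \<times> hom m' n"
    unfolding FV_def by (auto intro: mmult_hom)
qed

definition pullback_indicator :: "nat \<Rightarrow> ('k::field) mat \<Rightarrow> ('z \<times> 'k mat) set \<Rightarrow> 'z \<times> 'k mat \<Rightarrow> 'k" where
  "pullback_indicator m u C = (\<lambda>(z, f). if (z, mmult m f u) \<in> C then 1 else 0)"

lemma pairing_pull_pullback_indicator:
  fixes v :: "'z \<times> ('k::{field,finite}) mat \<Rightarrow> 'k"
  assumes "finite Z" and "g \<in> hom m' m"
  shows "pairing n Z m' (pull n m g v) (pullback_indicator m' u C)
           = pairing n Z m v (pullback_indicator m (mmult m' g u) C)"
  unfolding pairing_pull[OF assms] by (simp add: pullback_indicator_def mmult_assoc case_prod_beta)

definition probe_ker ::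
    "nat \<Rightarrow> 'z set \<Rightarrow> ('z \<Rightarrow> ('k::field) mat \<Rightarrow> 'z) \<Rightarrow> nat \<Rightarrow> nat \<Rightarrow> ('z \<times> 'k mat \<Rightarrow> 'k) set" where
  "probe_ker n Z act D m = {v \<in> FV n Z m. \<forall>u\<in>hom D m. \<forall>C. saturated n Z act D C
       \<longrightarrow> pairing n Z m v (pullback_indicator m u C) = 0}"

lemma GZ_rels_subset_probe_ker:
  fixes act :: "'z \<Rightarrow> ('k::{field,finite}) mat \<Rightarrow> 'z"
  assumes "finite Z" and "right_End_set n Z act"
  shows "GZ_rels n Z act m \<subseteq> probe_ker n Z act D m"
proof
  fix r assume "r \<in> GZ_rels n Z act m"
  then obtain z a f where r: "r = delta (act z a, f) - delta (z, mmult n a f)"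
    and zaf: "z \<in> Z" "a \<in> hom n n" "f \<in> hom m n"
    unfolding GZ_rels_def by blast
  have x: "(act z a, f) \<in> Z \<times> hom m n"
    using assms(2) zaf unfolding right_End_set_def by auto
  have y: "(z, mmult n a f) \<in> Z \<times> hom m n"
    using zaf by (auto intro: mmult_hom)
  have "r \<in> FV n Z m"
    using x y by (auto simp: FV_def r delta_def)
  moreover have "pairing n Z m r (pullback_indicator m u C) = 0"
    if "u \<in> hom D m" and "saturated n Z act D C" for u C
  proof -
    have "((act z a, mmult m f u), (z, mmult n a (mmult m f u))) \<in> XZ_equiv n Z act D"
      using zaf \<open>u \<in> hom D m\<close> unfolding XZ_equiv_def XZ_gen_def by (blast intro: mmult_hom)
    then show ?thesis
      using \<open>saturated n Z act D C\<close>
      by (simp add: r pairing_diff pairing_delta[OF assms(1) x] pairing_delta[OF assms(1) y]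
          pullback_indicator_def saturated_def mmult_assoc)
  qed
  ultimately show "r \<in> probe_ker n Z act D m"
    unfolding probe_ker_def by blast
qed

lemma GZ_subfunctor_probe_ker:
  fixes act :: "'z \<Rightarrow> ('k::{field,finite}) mat \<Rightarrow> 'z"
  assumes "finite Z" and "right_End_set n Z act"
  shows "GZ_subfunctor n Z act (probe_ker n Z act D)"
  unfolding GZ_subfunctor_def
proof (intro conjI allI ballI)
  fix m
  show "probe_ker n Z act D m \<subseteq> FV n Z m"
    by (auto simp: probe_ker_def)
  show "0 \<in> probe_ker n Z act D m"
    by (simp add: probe_ker_def FV_def pairing_def)
  show "GZ_rels n Z act m \<subseteq> probe_ker n Z act D m"
    by (rule GZ_rels_subset_probe_ker[OF assms])
  fix v assume v: "v \<in> probe_ker n Z act D m"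
  show "(\<lambda>x. c * v x) \<in> probe_ker n Z act D m" for c
    using v by (simp add: probe_ker_def FV_scale pairing_scale)
  show "v + w \<in> probe_ker n Z act D m" if "w \<in> probe_ker n Z act D m" for w
    using v that by (simp add: probe_ker_def FV_add pairing_add)
next
  fix m m' :: nat and g :: "'k mat" and v
  assume g: "g \<in> hom m' m" and v: "v \<in> probe_ker n Z act D m"
  then show "pull n m g v \<in> probe_ker n Z act D m'"
    unfolding probe_ker_def
    by (auto simp: pairing_pull_pullback_indicator[OF assms(1) g] intro: FV_pull mmult_hom)
qed


lemma cross_effect_pullback_indicator:
  fixes f u :: "('k::{field,finite}) mat" and z :: 'z
  assumes f: "f \<in> hom M n" and u: "u \<in> hom D M"
    and t: "t = CHAR('k) * card (hom D n :: 'k mat set)"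
  shows "(\<Sum>I\<in>Pow {0..t}. (-1) ^ (t + 1 - card I)
           * pullback_indicator M (mmult M (block_idem M b I) u) C (z, f)) = (0::'k)"
proof -
  define p where "p = CHAR('k)"
  define W where "W l = mmult M f (mmult M (block_idem M b {l}) u)" for l
  define \<Psi> where "\<Psi> h = (if (z, h) \<in> C then 1 else (0::'k))" for h
  have p: "prime p"
    unfolding p_def by (intro prime_CHAR_semidom finite_imp_CHAR_pos) simp
  have char_k: "of_nat p = (0 :: 'k)"
    unfolding p_def by simp
  have char_mat: "of_nat p = (0 :: 'k mat)"
    unfolding p_def by (simp add: of_nat_fun fun_eq_iff)
  have W_hom: "W \<in> {0..t} \<rightarrow> hom D n"
    unfolding W_def using f u by (auto intro!: mmult_hom block_idem_hom)
  have many: "(p - 1) * card (hom D n :: 'k mat set) < card {0..t}"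
    using t unfolding p_def by (simp add: diff_mult_distrib le_imp_less_Suc)
  have "pullback_indicator M (mmult M (block_idem M b I) u) C (z, f) = \<Psi> (\<Sum>l\<in>I. W l)"
    if "I \<in> Pow {0..t}" for I
  proof -
    have "finite I"
      using that finite_subset by auto
    then have "mmult M f (mmult M (block_idem M b I) u) = (\<Sum>l\<in>I. W l)"
      unfolding W_def block_idem_eq_sum[OF \<open>finite I\<close>] by (simp add: mmult_sum_left mmult_sum_right)
    then show ?thesis
      by (simp add: pullback_indicator_def \<Psi>_def)
  qed
  then have "(\<Sum>I\<in>Pow {0..t}. (-1) ^ (t + 1 - card I)
      * pullback_indicator M (mmult M (block_idem M b I) u) C (z, f))
      = (\<Sum>I\<in>Pow {0..t}. (-1) ^ (card {0..t} - card I) * \<Psi> (\<Sum>l\<in>I. W l))"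
    by (intro sum.cong) simp_all
  also have "\<dots> = 0"
    using alternating_subset_sum_vanishes[OF p char_mat char_k _ finite_hom W_hom many] by simp
  finally show ?thesis .
qed

lemma quotient_deg_le_probe_ker:
  fixes act :: "'z \<Rightarrow> ('k::{field,finite}) mat \<Rightarrow> 'z"
  assumes "finite Z" and t: "t = CHAR('k) * card (hom D n :: 'k mat set)"
  shows "quotient_deg_le n Z t (probe_ker n Z act D)"
  unfolding quotient_deg_le_def
proof (intro allI impI ballI)
  fix M and b :: "nat \<Rightarrow> nat" and v :: "'z \<times> 'k mat \<Rightarrow> 'k"
  assume v: "v \<in> FV n Z M"
  define c where "c I = (-1::'k) ^ (t + 1 - card I)" for I :: "nat set"
  define V where "V I = (\<lambda>x. c I * pull n M (block_idem M b I) v x)" for I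
  have "(\<Sum>I\<in>Pow {0..t}. V I) \<in> FV n Z M"
    unfolding V_def by (intro FV_sum FV_scale FV_pull[OF v block_idem_hom])
  moreover have "pairing n Z M (\<Sum>I\<in>Pow {0..t}. V I) (pullback_indicator M u C) = 0"
    if "u \<in> hom D M" for u C
  proof -
    have "pairing n Z M (\<Sum>I\<in>Pow {0..t}. V I) (pullback_indicator M u C)
        = (\<Sum>I\<in>Pow {0..t}. c I * pairing n Z M v (pullback_indicator M (mmult M (block_idem M b I) u) C))"
      by (simp add: V_def pairing_sum pairing_scale pairing_pull_pullback_indicator[OF assms(1) block_idem_hom])
    also have "\<dots> = (\<Sum>x\<in>Z \<times> hom M n. v x
        * (\<Sum>I\<in>Pow {0..t}. c I * pullback_indicator M (mmult M (block_idem M b I) u) C x))"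
      by (simp add: pairing_def sum_distrib_left mult.left_commute sum.swap[of _ "Pow {0..t}"])
    also have "\<dots> = 0"
    proof (intro sum.neutral ballI)
      fix x :: "'z \<times> 'k mat" assume "x \<in> Z \<times> hom M n"
      then obtain z f where "x = (z, f)" and f: "f \<in> hom M n"
        by auto
      then show "v x * (\<Sum>I\<in>Pow {0..t}. c I * pullback_indicator M (mmult M (block_idem M b I) u) C x) = 0"
        using cross_effect_pullback_indicator[OF f that t, of b C z] by (simp add: c_def)
    qed
    finally show ?thesis .
  qed
  ultimately show "(\<Sum>I\<in>Pow {0..t}. (\<lambda>x. (-1) ^ (t + 1 - card I) * pull n M (block_idem M b I) v x))
      \<in> probe_ker n Z act D M"
    unfolding probe_ker_def V_def c_def by blast
qed

lemma probe_ker_separates: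
  fixes act :: "'z \<Rightarrow> ('k::{field,finite}) mat \<Rightarrow> 'z"
  assumes "finite Z" and D: "D = card (hom 1 n \<times> hom 1 n :: ('k mat \<times> 'k mat) set)"
    and x: "x \<in> Z \<times> hom m n" and y: "y \<in> Z \<times> hom m n"
    and ker: "delta x - delta y \<in> probe_ker n Z act D m"
  shows "(x, y) \<in> XZ_equiv n Z act m"
proof -
  obtain z f z' f' where xy: "x = (z, f)" "y = (z', f')"
    by fastforce
  obtain u g where u: "u \<in> hom D m" and g: "g \<in> hom m D"
    and factor: "mmult D (mmult m f u) g = f" "mmult D (mmult m f' u) g = f'"
    using common_factorization[OF _ _ D, of f m f'] x y xy by auto
  define C where "C = {w. ((z, mmult m f u), w) \<in> XZ_equiv n Z act D}"
  have "saturated n Z act D C"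
    unfolding C_def by (rule saturated_XZ_class)
  then have "pairing n Z m (delta x - delta y) (pullback_indicator m u C) = 0"
    using ker u unfolding probe_ker_def by blast
  then have "pullback_indicator m u C x = pullback_indicator m u C y"
    by (simp add: pairing_diff pairing_delta[OF assms(1) x] pairing_delta[OF assms(1) y])
  then have "(z', mmult m f' u) \<in> C"
    by (simp add: xy pullback_indicator_def C_def XZ_equiv_def split: if_splits)
  then have "((z, mmult m f u), (z', mmult m f' u)) \<in> XZ_equiv n Z act D"
    by (simp add: C_def)
  from XZ_equiv_pull[OF this g] show ?thesis
    using factor xy by simp
qed

theorem theorem5p8:
  fixes Z :: "'z set" and act :: "'z \<Rightarrow> ('k::{field,finite}) mat \<Rightarrow> 'z" and n :: nat
  assumes "prime CARD('k)"
    and "finite Z"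
    and "right_End_set n Z act"
  shows "\<exists>t::nat. \<forall>m. \<forall>x\<in>Z \<times> hom m n. \<forall>y\<in>Z \<times> hom m n.
           (delta x - delta y :: 'z \<times> 'k mat \<Rightarrow> 'k) \<in> qt_ker n Z act t m
             \<longrightarrow> (x, y) \<in> XZ_equiv n Z act m"
proof -
  define D where "D = card (hom 1 n \<times> hom 1 n :: ('k mat \<times> 'k mat) set)"
  define t where "t = CHAR('k) * card (hom D n :: 'k mat set)"
  have "qt_ker n Z act t m \<subseteq> probe_ker n Z act D m" for m
    unfolding qt_ker_def
    using GZ_subfunctor_probe_ker[OF assms(2,3)] quotient_deg_le_probe_ker[OF assms(2) t_def]
    by blast
  then show ?thesis
    using probe_ker_separates[OF assms(2) D_def] by blast
qed

end
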